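(* Consider the static single-object erasure-coded Byzantine read/write protocol described in the context over a set $C$ of flexnodes, at most $b<\frac{|C|-k}{3}$ of which are Byzantine, and suppose at most $\delta$ write operations are concurrent with any read. In any execution, if $\omega$ is a complete write and $\rho$ a complete read such that $\omega$ completes before $\rho$ is invoked, and $\omega$ executes put-data$(\langle t_\omega,v_\omega\rangle)$ on $C$, then $\rho$ returns a value associated with a tag $t_\rho\ge t_\omega$.
   Context: Model. $C$ is a fixed finite set of processes ("flexnodes") over asynchronous reliable channels. Up to $b$ flexnodes may be Byzantine. Processes invoking reads/writes follow the protocol but may crash. Signatures are unforgeable. An $[n,k]$ RLNC code with $n=|C|$: $\mathrm{Encode}(v)$ produces $|C|$ coded elements, any $k$ of which (from the same encoding) recover $v$. Tags are pairs $(z,w)$, $z\in\mathbb{N}$, $w$ a writer identifier, ordered lexicographically. A parameter $\delta\ge1$ is fixed. A quorum is any subset of $C$ of size $\lceil (2|C|+k)/3\rceil$. State. Each flexnode keeps a set $List$ of signed triples $(\langle t,e\rangle,\sigma)$, initially holding the initial pair with tag $t_0$. Primitives (by flexnode $p$): get-tag: query all, each replies with its signed max-tag entry, wait for replies from a quorum, return the maximum verified tag. put-data$(\langle t,v\rangle)$: encode $v$ into $e_1,\dots,e_{|C|}$, send $\langle t,e_j\rangle$ signed by $p$ to the $j$-th flexnode; a receiver adds it to $List$ if the signature verifies and no entry with tag $t$ exists, then if $|List|>\delta+1$ removes the entries with minimum tag, and acknowledges; $p$ waits for a quorum of acknowledgements. get-data: query all, each replies with its $List$, wait for a quorum, keep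 verified pairs, take the maximum tag appearing in at least $k$ received lists, decode and return it with its tag; if none exists the primitive does not complete. Operations: read = get-data returning $\langle t,v\rangle$, then put-data$(\langle t,v\rangle)$, then return $\langle t,v\rangle$; write$(v)$ by $w$ = get-tag returning $t$, then put-data$(\langle (t.z+1,w),v\rangle)$. *)

theory Defs
  imports Complex_Main "HOL-Library.Multiset" "HOL-Library.Product_Lexorder"
begin

text \<open>Flexnodes are the indices 0..<N (so |C| = N; the j-th flexnode is j).
  Client processes (readers/writers) are identified by natural numbers; the
  writer identifier in a tag is the client id.  Tags are pairs (z,w) ordered
  lexicographically (Product_Lexorder).\<close>

type_synonym tag = "nat \<times> nat"
type_synonym opid = "nat \<times> nat"  \<comment> \<open>(client, sequence number of its operation)\<close>

definition t0 :: tag where "t0 = (0, 0)"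

datatype proc = Node nat | Client nat

datatype 'e msg =
    QTag
  | RTag "tag \<times> 'e"              \<comment> \<open>reply: signed max-tag entry\<close>
  | PutM "tag \<times> 'e"              \<comment> \<open>put-data: signed pair\<close>
  | Ack
  | QData
  | RData "(tag \<times> 'e) set"       \<comment> \<open>reply: the whole List\<close>

text \<open>A packet in transit: (sender, receiver, operation id, message).  Channels
  are authenticated point-to-point: the sender field cannot be forged.\<close>
type_synonym 'e packet = "proc \<times> proc \<times> opid \<times> 'e msg"

datatype opkind = WriteK | ReadK

datatype ('v, 'e) cstatus =
    Idle
  | GetTagPh 'v "(nat \<times> (tag \<times> 'e)) set"   \<comment> \<open>write in get-tag; replies (node, entry)\<close>
  | PutPh opkind "tag \<times> 'v" "nat set"       \<comment> \<open>put-data of the pair; acks received\<close>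
  | GetDataPh "(nat \<times> (tag \<times> 'e) set) set" \<comment> \<open>read in get-data; replies (node, List)\<close>

datatype 'v event =
    InvW opid 'v | RespW opid | InvR opid | RespR opid tag 'v

text \<open>Signatures are modelled abstractly: the ghost set signed contains exactly
  the pairs (tag, coded element) that have been signed by a (correct) invoking
  process; a pair verifies iff it is in this set (unforgeability).  The ghost
  map wtag records the tag t used by a write in its put-data.\<close>
record ('v, 'e) gstate =
  lst    :: "nat \<Rightarrow> (tag \<times> 'e) set"
  net    :: "'e packet multiset"
  signed :: "(tag \<times> 'e) set"
  cst    :: "nat \<Rightarrow> ('v, 'e) cstatus"
  cnt    :: "nat \<Rightarrow> nat"
  hist   :: "'v event list"
  wtag   :: "opid \<Rightarrow> tag option"

definition quorum_size :: "nat \<Rightarrow> nat \<Rightarrow> nat" where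
  "quorum_size N k = nat \<lceil>(2 * real N + real k) / 3\<rceil>"

definition evict :: "nat \<Rightarrow> (tag \<times> 'e) set \<Rightarrow> (tag \<times> 'e) set" where
  "evict \<delta> L = (if card L > \<delta> + 1 then {x \<in> L. fst x \<noteq> Min (fst ` L)} else L)"

definition good_tags :: "nat \<Rightarrow> (tag \<times> 'e) set \<Rightarrow> (nat \<times> (tag \<times> 'e) set) set \<Rightarrow> tag set" where
  "good_tags k S R = {t. k \<le> card {j. \<exists>L. (j, L) \<in> R \<and> (\<exists>e. (t, e) \<in> L \<inter> S)}}"

definition put_msgs :: "nat \<Rightarrow> nat \<Rightarrow> opid \<Rightarrow> ('v \<Rightarrow> nat \<Rightarrow> 'e) \<Rightarrow> tag \<Rightarrow> 'v \<Rightarrow> 'e packet multiset" where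
  "put_msgs N c oid enc t v = mset (map (\<lambda>j. (Client c, Node j, oid, PutM (t, enc v j))) [0..<N])"

definition bcast :: "nat \<Rightarrow> nat \<Rightarrow> opid \<Rightarrow> 'e msg \<Rightarrow> 'e packet multiset" where
  "bcast N c oid m = mset (map (\<lambda>j. (Client c, Node j, oid, m)) [0..<N])"

definition resp_event :: "opkind \<Rightarrow> opid \<Rightarrow> tag \<times> 'v \<Rightarrow> 'v event" where
  "resp_event kd oid tv = (case kd of WriteK \<Rightarrow> RespW oid | ReadK \<Rightarrow> RespR oid (fst tv) (snd tv))"

text \<open>Parameters: N = |C|, k (code dimension),
  delta, B = set of Byzantine flexnodes, enc v j = j-th coded element of v,
  dec = decoding.  Client crashes need no rule: a crashed process simply
  takes no further steps.\<close>
inductive step :: "nat \<Rightarrow> nat \<Rightarrow> nat \<Rightarrow> nat set \<Rightarrow> ('v \<Rightarrow> nat \<Rightarrow> 'e) \<Rightarrow> ('e set \<Rightarrow> 'v)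
                   \<Rightarrow> ('v, 'e) gstate \<Rightarrow> ('v, 'e) gstate \<Rightarrow> bool"
  for N k \<delta> B enc dec where
  invoke_write:
  "cst s c = Idle \<Longrightarrow>
   step N k \<delta> B enc dec s
     (s\<lparr>cst := (cst s)(c := GetTagPh v {}),
        net := net s + bcast N c (c, cnt s c) QTag,
        hist := hist s @ [InvW (c, cnt s c) v]\<rparr>)"
| invoke_read:
  "cst s c = Idle \<Longrightarrow>
   step N k \<delta> B enc dec s
     (s\<lparr>cst := (cst s)(c := GetDataPh {}),
        net := net s + bcast N c (c, cnt s c) QData,
        hist := hist s @ [InvR (c, cnt s c)]\<rparr>)"
| node_tag:
  "j < N \<Longrightarrow> j \<notin> B \<Longrightarrow> (src, Node j, oid, QTag) \<in># net s \<Longrightarrow>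
   p \<in> lst s j \<Longrightarrow> fst p = Max (fst ` lst s j) \<Longrightarrow>
   step N k \<delta> B enc dec s
     (s\<lparr>net := net s - {#(src, Node j, oid, QTag)#} + {#(Node j, src, oid, RTag p)#}\<rparr>)"
| client_tag_wait:
  "(Node j, Client c, (c, cnt s c), RTag p) \<in># net s \<Longrightarrow>
   cst s c = GetTagPh v R \<Longrightarrow> j \<notin> fst ` R \<Longrightarrow>
   \<not> quorum_size N k \<le> card (fst ` insert (j, p) R) \<Longrightarrow>
   step N k \<delta> B enc dec s
     (s\<lparr>cst := (cst s)(c := GetTagPh v (insert (j, p) R)),
        net := net s - {#(Node j, Client c, (c, cnt s c), RTag p)#}\<rparr>)"
| client_tag_done:
  "(Node j, Client c, (c, cnt s c), RTag p) \<in># net s \<Longrightarrow>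
   cst s c = GetTagPh v R \<Longrightarrow> j \<notin> fst ` R \<Longrightarrow>
   quorum_size N k \<le> card (fst ` insert (j, p) R) \<Longrightarrow>
   t = Max {fst x | i x. (i, x) \<in> insert (j, p) R \<and> x \<in> signed s} \<Longrightarrow>
   t' = (fst t + 1, c) \<Longrightarrow>
   step N k \<delta> B enc dec s
     (s\<lparr>cst := (cst s)(c := PutPh WriteK (t', v) {}),
        net := net s - {#(Node j, Client c, (c, cnt s c), RTag p)#}
                 + put_msgs N c (c, cnt s c) enc t' v,
        signed := signed s \<union> {(t', enc v i) | i. i < N},
        wtag := (wtag s)((c, cnt s c) := Some t')\<rparr>)"
| node_put:
  "j < N \<Longrightarrow> j \<notin> B \<Longrightarrow> (src, Node j, oid, PutM p) \<in># net s \<Longrightarrow>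
   L' = (if p \<in> signed s \<and> (\<forall>x\<in>lst s j. fst x \<noteq> fst p)
         then evict \<delta> (insert p (lst s j)) else lst s j) \<Longrightarrow>
   step N k \<delta> B enc dec s
     (s\<lparr>lst := (lst s)(j := L'),
        net := net s - {#(src, Node j, oid, PutM p)#} + {#(Node j, src, oid, Ack)#}\<rparr>)"
| client_ack_wait:
  "(Node j, Client c, (c, cnt s c), Ack) \<in># net s \<Longrightarrow>
   cst s c = PutPh kd tv A \<Longrightarrow>
   \<not> quorum_size N k \<le> card (insert j A) \<Longrightarrow>
   step N k \<delta> B enc dec s
     (s\<lparr>cst := (cst s)(c := PutPh kd tv (insert j A)),
        net := net s - {#(Node j, Client c, (c, cnt s c), Ack)#}\<rparr>)"
| client_ack_done:
  "(Node j, Client c, (c, cnt s c), Ack) \<in># net s \<Longrightarrow>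
   cst s c = PutPh kd tv A \<Longrightarrow>
   quorum_size N k \<le> card (insert j A) \<Longrightarrow>
   step N k \<delta> B enc dec s
     (s\<lparr>cst := (cst s)(c := Idle),
        cnt := (cnt s)(c := Suc (cnt s c)),
        net := net s - {#(Node j, Client c, (c, cnt s c), Ack)#},
        hist := hist s @ [resp_event kd (c, cnt s c) tv]\<rparr>)"
| node_data:
  "j < N \<Longrightarrow> j \<notin> B \<Longrightarrow> (src, Node j, oid, QData) \<in># net s \<Longrightarrow>
   step N k \<delta> B enc dec s
     (s\<lparr>net := net s - {#(src, Node j, oid, QData)#} + {#(Node j, src, oid, RData (lst s j))#}\<rparr>)"
| client_data_wait:
  "(Node j, Client c, (c, cnt s c), RData L) \<in># net s \<Longrightarrow>
   cst s c = GetDataPh R \<Longrightarrow> j \<notin> fst ` R \<Longrightarrow> card (fst ` R) < quorum_size N k \<Longrightarrow>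
   \<not> (card (fst ` insert (j, L) R) = quorum_size N k
       \<and> good_tags k (signed s) (insert (j, L) R) \<noteq> {}) \<Longrightarrow>
   step N k \<delta> B enc dec s
     (s\<lparr>cst := (cst s)(c := GetDataPh (insert (j, L) R)),
        net := net s - {#(Node j, Client c, (c, cnt s c), RData L)#}\<rparr>)"
| client_data_done:
  "(Node j, Client c, (c, cnt s c), RData L) \<in># net s \<Longrightarrow>
   cst s c = GetDataPh R \<Longrightarrow> j \<notin> fst ` R \<Longrightarrow> card (fst ` R) < quorum_size N k \<Longrightarrow>
   card (fst ` insert (j, L) R) = quorum_size N k \<Longrightarrow>
   good_tags k (signed s) (insert (j, L) R) \<noteq> {} \<Longrightarrow>
   t = Max (good_tags k (signed s) (insert (j, L) R)) \<Longrightarrow>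
   v = dec {e. \<exists>i L'. (i, L') \<in> insert (j, L) R \<and> (t, e) \<in> L' \<inter> signed s} \<Longrightarrow>
   step N k \<delta> B enc dec s
     (s\<lparr>cst := (cst s)(c := PutPh ReadK (t, v) {}),
        net := net s - {#(Node j, Client c, (c, cnt s c), RData L)#}
                 + put_msgs N c (c, cnt s c) enc t v,
        signed := signed s \<union> {(t, enc v i) | i. i < N}\<rparr>)"
| byzantine:
  "j \<in> B \<Longrightarrow>
   step N k \<delta> B enc dec s (s\<lparr>net := net s + {#(Node j, dst, oid, m)#}\<rparr>)"

definition init_state :: "nat \<Rightarrow> ('v \<Rightarrow> nat \<Rightarrow> 'e) \<Rightarrow> 'v \<Rightarrow> ('v, 'e) gstate" where
  "init_state N enc v0 =
     \<lparr>lst = (\<lambda>j. {(t0, enc v0 j)}), net = {#}, signed = {(t0, enc v0 j) | j. j < N},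
      cst = (\<lambda>c. Idle), cnt = (\<lambda>c. 0), hist = [], wtag = (\<lambda>x. None)\<rparr>"

definition reachable :: "nat \<Rightarrow> nat \<Rightarrow> nat \<Rightarrow> nat set \<Rightarrow> ('v \<Rightarrow> nat \<Rightarrow> 'e) \<Rightarrow> ('e set \<Rightarrow> 'v)
                         \<Rightarrow> 'v \<Rightarrow> ('v, 'e) gstate \<Rightarrow> bool" where
  "reachable N k \<delta> B enc dec v0 s = (step N k \<delta> B enc dec)\<^sup>*\<^sup>* (init_state N enc v0) s"

definition is_inv :: "'v event \<Rightarrow> opid \<Rightarrow> bool" where
  "is_inv ev oid = (case ev of InvW oid' _ \<Rightarrow> oid' = oid | InvR oid' \<Rightarrow> oid' = oid | _ \<Rightarrow> False)"

definition is_resp :: "'v event \<Rightarrow> opid \<Rightarrow> bool" where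
  "is_resp ev oid = (case ev of RespW oid' \<Rightarrow> oid' = oid | RespR oid' _ _ \<Rightarrow> oid' = oid | _ \<Rightarrow> False)"

definition precedes :: "'v event list \<Rightarrow> opid \<Rightarrow> opid \<Rightarrow> bool" where
  "precedes h o1 o2 = (\<exists>i j. i < j \<and> j < length h \<and> is_resp (h ! i) o1 \<and> is_inv (h ! j) o2)"

definition write_ops :: "'v event list \<Rightarrow> opid set" where
  "write_ops h = {oid. \<exists>i v. i < length h \<and> h ! i = InvW oid v}"

definition read_ops :: "'v event list \<Rightarrow> opid set" where
  "read_ops h = {oid. \<exists>i. i < length h \<and> h ! i = InvR oid}"

definition concurrent :: "'v event list \<Rightarrow> opid \<Rightarrow> opid \<Rightarrow> bool" where
  "concurrent h o1 o2 = (\<not> precedes h o1 o2 \<and> \<not> precedes h o2 o1)"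

definition delta_bounded :: "nat \<Rightarrow> 'v event list \<Rightarrow> bool" where
  "delta_bounded \<delta> h = (\<forall>\<rho>\<in>read_ops h. card {\<omega>\<in>write_ops h. concurrent h \<omega> \<rho>} \<le> \<delta>)"

definition code_ok :: "nat \<Rightarrow> nat \<Rightarrow> ('v \<Rightarrow> nat \<Rightarrow> 'e) \<Rightarrow> ('e set \<Rightarrow> 'v) \<Rightarrow> bool" where
  "code_ok N k enc dec = (\<forall>v S. S \<subseteq> {..<N} \<and> k \<le> card S \<longrightarrow> dec (enc v ` S) = v)"

end

theory Submission
  imports Defs
begin

(* Let T be the largest tag written by a write that completes before the read is invoked, so
   t_omega <= T, and let Q be the quorum that acknowledged that write. A correct flexnode evicts
   an entry only if its list is too long and the entry has the minimum tag, so it keeps tag T as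
   long as at most delta signed tags exceed T. Up to the response of the read, every signed tag
   above T is the tag of a write concurrent with the read (earlier writes have tags at most T,
   later ones have not signed anything yet), so there are at most delta of them and every correct
   member of Q still holds T when it answers the read. Since b < (|C| - k) / 3, two quorums share
   at least k correct flexnodes, so T occurs in at least k of the lists the read collects and the
   read returns a tag >= T. *)

lemma nth_eq_if_length_filter_le_1:
  assumes "length (filter P xs) \<le> 1" and "i < length xs" "j < length xs" and "P (xs ! i)" "P (xs ! j)"
  shows "i = j"
  using assms by (auto simp: length_filter_conv_card card_le_Suc0_iff_eq)

lemma in_diff_plusD:
  "x \<in># M - M' + P \<Longrightarrow> x \<in># M \<or> x \<in># P"
  "x \<in># M + P - M' \<Longrightarrow> x \<in># M \<or> x \<in># P"
  by (auto dest: in_diffD)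

(* H holds at the end and is inherited backwards along the path (in the application: a bound on
   the number of signed tags above a given one), and P is preserved by steps taken while H holds. *)
lemma rtranclp_invariant_under_backward_condition:
  assumes "r\<^sup>*\<^sup>* x y" and "H y" and "P x"
    and H_back: "\<And>u v. r\<^sup>*\<^sup>* x u \<Longrightarrow> r u v \<Longrightarrow> H v \<Longrightarrow> H u"
    and P_step: "\<And>u v. r\<^sup>*\<^sup>* x u \<Longrightarrow> r u v \<Longrightarrow> H u \<Longrightarrow> P u \<Longrightarrow> P v"
  shows "P y"
proof -
  have "H y \<longrightarrow> P y"
    using \<open>r\<^sup>*\<^sup>* x y\<close>
  proof (induction rule: rtranclp_induct)
    case (step u v)
    then show ?case using H_back P_step by blast
  qed (use \<open>P x\<close> in blast)
  then show ?thesis using \<open>H y\<close> by blast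
qed

lemma is_inv_simps [simp]:
  "is_inv (InvW op' v) op \<longleftrightarrow> op' = op" "is_inv (InvR op') op \<longleftrightarrow> op' = op"
  "\<not> is_inv (RespW op') op" "\<not> is_inv (RespR op' t v) op"
  by (auto simp: is_inv_def)

lemma is_resp_simps [simp]:
  "is_resp (RespW op') op \<longleftrightarrow> op' = op" "is_resp (RespR op' t v) op \<longleftrightarrow> op' = op"
  "\<not> is_resp (InvW op' v) op" "\<not> is_resp (InvR op') op"
  by (auto simp: is_resp_def)

lemma resp_event_simps [simp]:
  "is_resp (resp_event kd op' tv) op \<longleftrightarrow> op' = op" "\<not> is_inv (resp_event kd op' tv) op"
  by (cases kd; simp add: resp_event_def)+

lemma in_bcast [simp]: "x \<in># bcast N c op m \<longleftrightarrow> (\<exists>j<N. x = (Client c, Node j, op, m))"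
  by (auto simp: bcast_def)

lemma in_put_msgs [simp]:
  "x \<in># put_msgs N c op enc t v \<longleftrightarrow> (\<exists>j<N. x = (Client c, Node j, op, PutM (t, enc v j)))"
  by (auto simp: put_msgs_def)

definition event_op :: "'v event \<Rightarrow> opid" where
  "event_op e = (case e of InvW op v \<Rightarrow> op | InvR op \<Rightarrow> op | RespW op \<Rightarrow> op | RespR op t v \<Rightarrow> op)"

lemma event_op_resp: "is_resp e op \<Longrightarrow> event_op e = op"
  by (cases e) (simp_all add: event_op_def)

lemma finite_precedes: "finite {op. precedes h op op'}"
proof (rule finite_subset)
  show "{op. precedes h op op'} \<subseteq> event_op ` set h"
  proof
    fix op assume "op \<in> {op. precedes h op op'}"
    then obtain i j where "i < j" "j < length h" "is_resp (h ! i) op"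
      by (auto simp: precedes_def)
    then show "op \<in> event_op ` set h"
      using event_op_resp by (metis image_eqI nth_mem order.strict_trans)
  qed
qed simp

lemma finite_write_ops: "finite (write_ops h)"
proof (rule finite_subset)
  show "write_ops h \<subseteq> event_op ` set h"
    unfolding write_ops_def by (force simp: event_op_def intro: nth_mem)
qed simp

lemma max_preceding_tag:
  fixes wt :: "opid \<Rightarrow> tag option"
  assumes "precedes h op0 \<rho>" and "wt op0 = Some t"
  obtains op T where "precedes h op \<rho>" "wt op = Some T" "t \<le> T"
    "\<forall>op' t'. precedes h op' \<rho> \<longrightarrow> wt op' = Some t' \<longrightarrow> t' \<le> T"
proof -
  define pre where "pre = {t'. \<exists>op. wt op = Some t' \<and> precedes h op \<rho>}"
  have fin: "finite pre"
    using finite_surj[OF finite_precedes[of h \<rho>], of pre "\<lambda>op. the (wt op)"] by (force simp: pre_def)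
  have "t \<in> pre" using assms unfolding pre_def by blast
  then obtain op where "precedes h op \<rho>" "wt op = Some (Max pre)"
    using Max_in[OF fin] unfolding pre_def by blast
  moreover have "t \<le> Max pre" using fin \<open>t \<in> pre\<close> by simp
  moreover have "\<forall>op' t'. precedes h op' \<rho> \<longrightarrow> wt op' = Some t' \<longrightarrow> t' \<le> Max pre"
    using Max_ge[OF fin] unfolding pre_def by blast
  ultimately show thesis using that by blast
qed

lemma t0_le [simp]: "t0 \<le> t"
  by (cases t) (simp add: t0_def)

section \<open>Eviction\<close>

definition tags_above :: "tag \<Rightarrow> (tag \<times> 'e) set \<Rightarrow> tag set" where
  "tags_above t S = {t' \<in> fst ` S. t < t'}"

lemma card_tags_above_mono:
  "S \<subseteq> S' \<Longrightarrow> finite S' \<Longrightarrow> card (tags_above t S) \<le> card (tags_above t S')"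
  unfolding tags_above_def by (intro card_mono) auto

lemma evict_subset: "evict d L \<subseteq> L"
  by (auto simp: evict_def)

lemma evict_keeps:
  assumes "finite L" and "inj_on fst L" and "(t, e) \<in> L"
    and "card (tags_above t L) \<le> d"
  shows "(t, e) \<in> evict d L"
proof (cases "d + 1 < card L")
  case True
  have "t \<noteq> Min (fst ` L)"
  proof
    assume t_min: "t = Min (fst ` L)"
    have sub: "fst ` L - {t} \<subseteq> {t' \<in> fst ` L. t < t'}"
    proof
      fix t' assume t': "t' \<in> fst ` L - {t}"
      then have "t \<le> t'" using t_min \<open>finite L\<close> by simp
      then show "t' \<in> {t' \<in> fst ` L. t < t'}" using t' by auto
    qed
    have "card (fst ` L - {t}) \<le> card (tags_above t L)"
      using sub assms(1) unfolding tags_above_def by (intro card_mono) auto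
    then have "card (fst ` L - {t}) \<le> d" using assms(4) by linarith
    moreover have "card (fst ` L - {t}) = card L - 1"
    proof -
      have "t \<in> fst ` L" using assms(3) by force
      then show ?thesis using card_image[OF assms(2)] by (simp add: card_Diff_singleton)
    qed
    ultimately show False using True by linarith
  qed
  then show ?thesis unfolding evict_def using True assms(3) by auto
qed (use assms(3) in \<open>simp add: evict_def\<close>)

definition accept_put :: "nat \<Rightarrow> (tag \<times> 'e) set \<Rightarrow> tag \<times> 'e \<Rightarrow> (tag \<times> 'e) set \<Rightarrow> (tag \<times> 'e) set" where
  "accept_put d S p L = (if p \<in> S \<and> (\<forall>x\<in>L. fst x \<noteq> fst p) then evict d (insert p L) else L)"

lemma accept_put_subset: "accept_put d S p L \<subseteq> insert p L"
  using evict_subset by (auto simp: accept_put_def)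

lemma finite_accept_put: "finite L \<Longrightarrow> finite (accept_put d S p L)"
  by (rule finite_subset[OF accept_put_subset]) simp

lemma inj_on_fst_accept_put:
  assumes "inj_on fst L" shows "inj_on fst (accept_put d S p L)"
proof (cases "p \<in> S \<and> (\<forall>x\<in>L. fst x \<noteq> fst p)")
  case True
  then have "inj_on fst (insert p L)" using assms by (auto simp: inj_on_insert)
  then have "inj_on fst (evict d (insert p L))" by (rule inj_on_subset[OF _ evict_subset])
  then show ?thesis using True by (simp add: accept_put_def)
next
  case False
  then have "accept_put d S p L = L" unfolding accept_put_def by presburger
  then show ?thesis using assms by simp
qed

lemma accept_put_subset_signed: "L \<subseteq> S \<Longrightarrow> accept_put d S p L \<subseteq> S"
  unfolding accept_put_def using evict_subset[of d "insert p L"] by auto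

lemma accept_put_keeps_tag:
  assumes "finite S" and "L \<subseteq> S" and "inj_on fst L"
    and "card (tags_above t S) \<le> d"
    and "t \<in> fst ` L \<or> p \<in> S \<and> fst p = t"
  shows "t \<in> fst ` accept_put d S p L"
proof (cases "p \<in> S \<and> (\<forall>x\<in>L. fst x \<noteq> fst p)")
  case True
  have fin: "finite (insert p L)" using assms(1,2) True finite_subset by auto
  have inj: "inj_on fst (insert p L)" using assms(3) True by (auto simp: inj_on_def)
  obtain e where te: "(t, e) \<in> insert p L" using assms(5) by (metis imageE insertCI prod.collapse)
  have "card (tags_above t (insert p L)) \<le> card (tags_above t S)"
    using assms(1,2) True by (intro card_tags_above_mono) auto
  then have "(t, e) \<in> evict d (insert p L)"
    using evict_keeps[OF fin inj te, of d] assms(4) by linarith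
  moreover have "accept_put d S p L = evict d (insert p L)"
    using True by (simp add: accept_put_def)
  ultimately show ?thesis by (metis fst_conv image_eqI)
next
  case False
  then have "t \<in> fst ` L" using assms(5) by (metis image_eqI)
  moreover have "accept_put d S p L = L"
    using False unfolding accept_put_def by presburger
  ultimately show ?thesis by simp
qed

section \<open>Quorums\<close>

lemma good_tags_subset:
  assumes "1 \<le> k" shows "good_tags k S R \<subseteq> fst ` S"
proof
  fix t assume "t \<in> good_tags k S R"
  then have "0 < card {j. \<exists>L. (j, L) \<in> R \<and> (\<exists>e. (t, e) \<in> L \<inter> S)}"
    using assms by (simp add: good_tags_def)
  then have "{j. \<exists>L. (j, L) \<in> R \<and> (\<exists>e. (t, e) \<in> L \<inter> S)} \<noteq> {}"
    using card_gt_0_iff by blast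
  then obtain e where "(t, e) \<in> S" by blast
  then show "t \<in> fst ` S" by (metis fst_conv image_eqI)
qed

lemma finite_good_tags: "1 \<le> k \<Longrightarrow> finite S \<Longrightarrow> finite (good_tags k S R)"
  by (rule finite_subset[OF good_tags_subset finite_imageI])

lemma quorum_size_intersection:
  assumes "3 * f + k < N"
  shows "k + N + f < 2 * quorum_size N k"
proof -
  have "(2 * real N + real k) / 3 \<le> real (quorum_size N k)"
    unfolding quorum_size_def by (rule real_nat_ceiling_ge)
  then have q: "2 * real N + real k \<le> 3 * real (quorum_size N k)" by simp
  have "real (3 * f + k) < real N" using assms by (simp only: of_nat_less_iff)
  then have "3 * real f + real k < real N" by simp
  then have "real k + real N + real f < 2 * real (quorum_size N k)" using q by linarith
  then have "real (k + N + f) < real (2 * quorum_size N k)" by simp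
  then show ?thesis by (simp only: of_nat_less_iff)
qed

lemma resilience_condition_nat:
  assumes "f \<le> b" and "real b < (real N - real k) / 3"
  shows "3 * f + k < N"
proof -
  have "real f \<le> real b" using assms(1) by simp
  then have "real (3 * f + k) < real N" using assms(2) by simp
  then show ?thesis by (simp only: of_nat_less_iff)
qed

lemma card_quorum_intersection_correct:
  assumes "X \<subseteq> {..<N}" "Y \<subseteq> {..<N}" and "q \<le> card X" "q \<le> card Y"
    and "finite F" and "k + N + card F < 2 * q"
  shows "k \<le> card (X \<inter> Y - F)"
proof -
  have fin: "finite X" "finite Y" using assms(1,2) finite_subset by auto
  have "card (X \<union> Y) \<le> N" using assms(1,2) card_mono[of "{..<N}" "X \<union> Y"] by simp
  moreover have "card (X \<union> Y) + card (X \<inter> Y) = card X + card Y"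
    using card_Un_Int[OF fin] by simp
  moreover have "card (X \<inter> Y) \<le> card (X \<inter> Y - F \<union> F)"
    using fin assms(5) by (intro card_mono) auto
  moreover have "card (X \<inter> Y - F \<union> F) \<le> card (X \<inter> Y - F) + card F"
    by (rule card_Un_le)
  ultimately show ?thesis using assms(3,4,6) by linarith
qed

lemma quorum_tag_in_good_tags:
  assumes "fst ` R \<subseteq> {..<N}" "Q \<subseteq> {..<N}" and "q \<le> card (fst ` R)" "q \<le> card Q"
    and "finite F" and "k + N + card F < 2 * q"
    and "\<forall>(j, L)\<in>R. j \<in> Q - F \<longrightarrow> t \<in> fst ` (L \<inter> S)"
  shows "t \<in> good_tags k S R"
proof -
  let ?C = "{j. \<exists>L. (j, L) \<in> R \<and> (\<exists>e. (t, e) \<in> L \<inter> S)}"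
  have "fst ` R \<inter> Q - F \<subseteq> ?C" using assms(7) by force
  moreover have "finite ?C"
  proof (rule finite_subset)
    show "?C \<subseteq> {..<N}" using assms(1) by force
  qed simp
  ultimately have "card (fst ` R \<inter> Q - F) \<le> card ?C" by (rule card_mono[rotated])
  moreover have "k \<le> card (fst ` R \<inter> Q - F)"
    using card_quorum_intersection_correct[OF assms(1-6)] .
  ultimately show ?thesis by (simp add: good_tags_def)
qed

section \<open>Invariants of reachable states\<close>

definition invoked_ids_issued :: "('v, 'e) gstate \<Rightarrow> bool" where
  "invoked_ids_issued s \<longleftrightarrow>
     (\<forall>x\<in>set (hist s). \<forall>c m. is_inv x (c, m) \<longrightarrow> m < cnt s c \<or> m = cnt s c \<and> cst s c \<noteq> Idle)"

definition responded_ids_retired :: "('v, 'e) gstate \<Rightarrow> bool" where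
  "responded_ids_retired s \<longleftrightarrow> (\<forall>x\<in>set (hist s). \<forall>c m. is_resp x (c, m) \<longrightarrow> m < cnt s c)"

definition invocations_unique :: "('v, 'e) gstate \<Rightarrow> bool" where
  "invocations_unique s \<longleftrightarrow> (\<forall>op. length (filter (\<lambda>x. is_inv x op) (hist s)) \<le> 1)"

definition responses_unique :: "('v, 'e) gstate \<Rightarrow> bool" where
  "responses_unique s \<longleftrightarrow> (\<forall>op. length (filter (\<lambda>x. is_resp x op) (hist s)) \<le> 1)"

definition pending_ops_invoked :: "('v, 'e) gstate \<Rightarrow> bool" where
  "pending_ops_invoked s \<longleftrightarrow>
     (\<forall>c v R. cst s c = GetTagPh v R \<longrightarrow> InvW (c, cnt s c) v \<in> set (hist s)) \<and>
     (\<forall>c R. cst s c = GetDataPh R \<longrightarrow> InvR (c, cnt s c) \<in> set (hist s)) \<and>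
     (\<forall>c kd tv A. cst s c = PutPh kd tv A \<longrightarrow> (\<exists>x\<in>set (hist s). is_inv x (c, cnt s c)))"

locale protocol =
  fixes N k \<delta> :: nat and B :: "nat set"
    and enc :: "'v \<Rightarrow> nat \<Rightarrow> 'e" and dec :: "'e set \<Rightarrow> 'v" and v0 :: 'v
  assumes byzantine_flexnodes: "B \<subseteq> {..<N}" and k_pos: "1 \<le> k"
begin

abbreviation pstep :: "('v, 'e) gstate \<Rightarrow> ('v, 'e) gstate \<Rightarrow> bool" where
  "pstep \<equiv> step N k \<delta> B enc dec"

abbreviation reach :: "('v, 'e) gstate \<Rightarrow> bool" where
  "reach \<equiv> reachable N k \<delta> B enc dec v0"

lemma invoked_ids_issued_step:
  "pstep s s' \<Longrightarrow> invoked_ids_issued s \<Longrightarrow> invoked_ids_issued s'"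
proof (induction rule: step.induct)
  case (client_ack_done j c s kd tv A)
  then show ?case by (fastforce simp: invoked_ids_issued_def less_Suc_eq)
qed (auto simp: invoked_ids_issued_def)

lemma responded_ids_retired_step:
  "pstep s s' \<Longrightarrow> responded_ids_retired s \<Longrightarrow> responded_ids_retired s'"
  by (induction rule: step.induct) (fastforce simp: responded_ids_retired_def)+

lemma invocations_unique_step:
  assumes "pstep s s'" and "invoked_ids_issued s" and "invocations_unique s"
  shows "invocations_unique s'"
  using assms
proof (induction rule: step.induct)
  case (invoke_write s c v)
  then have "filter (\<lambda>x. is_inv x (c, cnt s c)) (hist s) = []"
    by (fastforce simp: invoked_ids_issued_def filter_empty_conv)
  then show ?case using invoke_write.prems(2) by (auto simp: invocations_unique_def)
next
  case (invoke_read s c)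
  then have "filter (\<lambda>x. is_inv x (c, cnt s c)) (hist s) = []"
    by (fastforce simp: invoked_ids_issued_def filter_empty_conv)
  then show ?case using invoke_read.prems(2) by (auto simp: invocations_unique_def)
qed (auto simp: invocations_unique_def)

lemma responses_unique_step:
  assumes "pstep s s'" and "responded_ids_retired s" and "responses_unique s"
  shows "responses_unique s'"
  using assms
proof (induction rule: step.induct)
  case (client_ack_done j c s kd tv A)
  then have "filter (\<lambda>x. is_resp x (c, cnt s c)) (hist s) = []"
    by (fastforce simp: responded_ids_retired_def filter_empty_conv)
  then show ?case using client_ack_done.prems(2) by (auto simp: responses_unique_def)
qed (auto simp: responses_unique_def)

lemma pending_ops_invoked_step:
  "pstep s s' \<Longrightarrow> pending_ops_invoked s \<Longrightarrow> pending_ops_invoked s'"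
proof (induction rule: step.induct)
  case (client_tag_done j c s p v R t t')
  then have "InvW (c, cnt s c) v \<in> set (hist s)" by (simp add: pending_ops_invoked_def)
  then have "\<exists>x\<in>set (hist s). is_inv x (c, cnt s c)" by (metis is_inv_simps(1))
  with client_tag_done.prems show ?case by (auto simp: pending_ops_invoked_def)
next
  case (client_data_done j c s L R t v)
  then have "InvR (c, cnt s c) \<in> set (hist s)" by (simp add: pending_ops_invoked_def)
  then have "\<exists>x\<in>set (hist s). is_inv x (c, cnt s c)" by (metis is_inv_simps(2))
  with client_data_done.prems show ?case by (auto simp: pending_ops_invoked_def)
qed (auto simp: pending_ops_invoked_def)

lemma pending_op_invoked:
  assumes "pending_ops_invoked s" and "cst s c \<noteq> Idle"
  shows "\<exists>x\<in>set (hist s). is_inv x (c, cnt s c)"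
proof (cases "cst s c")
  case (GetTagPh v R)
  then have "InvW (c, cnt s c) v \<in> set (hist s)" using assms(1) by (simp add: pending_ops_invoked_def)
  then show ?thesis by (metis is_inv_simps(1))
next
  case (GetDataPh R)
  then have "InvR (c, cnt s c) \<in> set (hist s)" using assms(1) by (simp add: pending_ops_invoked_def)
  then show ?thesis by (metis is_inv_simps(2))
qed (use assms in \<open>auto simp: pending_ops_invoked_def\<close>)

definition finite_state :: "('v, 'e) gstate \<Rightarrow> bool" where
  "finite_state s \<longleftrightarrow> (\<forall>j. finite (lst s j)) \<and> finite (signed s)"

definition lists_tag_injective :: "('v, 'e) gstate \<Rightarrow> bool" where
  "lists_tag_injective s \<longleftrightarrow> (\<forall>j. inj_on fst (lst s j))"

definition lists_signed :: "('v, 'e) gstate \<Rightarrow> bool" where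
  "lists_signed s \<longleftrightarrow> (\<forall>j<N. lst s j \<subseteq> signed s)"

definition signed_tags_written :: "('v, 'e) gstate \<Rightarrow> bool" where
  "signed_tags_written s \<longleftrightarrow> fst ` signed s \<subseteq> insert t0 (ran (wtag s))"

definition written_tags_invoked :: "('v, 'e) gstate \<Rightarrow> bool" where
  "written_tags_invoked s \<longleftrightarrow> (\<forall>op t. wtag s op = Some t \<longrightarrow> (\<exists>v. InvW op v \<in> set (hist s)))"

definition get_tag_phase_untagged :: "('v, 'e) gstate \<Rightarrow> bool" where
  "get_tag_phase_untagged s \<longleftrightarrow> (\<forall>c v R. cst s c = GetTagPh v R \<longrightarrow> wtag s (c, cnt s c) = None)"

definition puts_signed :: "('v, 'e) gstate \<Rightarrow> bool" where
  "puts_signed s \<longleftrightarrow> (\<forall>c d op p. (Client c, d, op, PutM p) \<in># net s \<longrightarrow>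
     p \<in> signed s \<and> (wtag s op = Some (fst p) \<or> InvR op \<in> set (hist s)))"

definition client_packets_invoked :: "('v, 'e) gstate \<Rightarrow> bool" where
  "client_packets_invoked s \<longleftrightarrow>
     (\<forall>c d op m. (Client c, d, op, m) \<in># net s \<longrightarrow> (\<exists>x\<in>set (hist s). is_inv x op))"

definition correct_packets_invoked :: "('v, 'e) gstate \<Rightarrow> bool" where
  "correct_packets_invoked s \<longleftrightarrow>
     (\<forall>j c op m. j \<notin> B \<longrightarrow> (Node j, Client c, op, m) \<in># net s \<longrightarrow> (\<exists>x\<in>set (hist s). is_inv x op))"

definition node_packets_from_flexnodes :: "('v, 'e) gstate \<Rightarrow> bool" where
  "node_packets_from_flexnodes s \<longleftrightarrow> (\<forall>j d op m. (Node j, d, op, m) \<in># net s \<longrightarrow> j < N)"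

definition collected_from_flexnodes :: "('v, 'e) gstate \<Rightarrow> bool" where
  "collected_from_flexnodes s \<longleftrightarrow>
     (\<forall>c kd tv A. cst s c = PutPh kd tv A \<longrightarrow> A \<subseteq> {..<N}) \<and>
     (\<forall>c R. cst s c = GetDataPh R \<longrightarrow> fst ` R \<subseteq> {..<N})"

lemma step_lst_cases:
  "pstep s s' \<Longrightarrow> lst s' j = lst s j \<or> j < N \<and> (\<exists>p. lst s' j = accept_put \<delta> (signed s) p (lst s j))"
proof (induction rule: step.induct)
  case (node_put j' src oid p s L')
  then have "L' = accept_put \<delta> (signed s) p (lst s j')" by (simp add: accept_put_def)
  then have "j' = j \<Longrightarrow> \<exists>p. L' = accept_put \<delta> (signed s) p (lst s j)" by blast
  then show ?case using node_put.hyps(1) by (cases "j' = j") simp_all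
qed auto

lemma step_signed_mono: "pstep s s' \<Longrightarrow> signed s \<subseteq> signed s'"
  by (induction rule: step.induct) auto

lemma step_hist_cases: "pstep s s' \<Longrightarrow> hist s' = hist s \<or> (\<exists>e. hist s' = hist s @ [e])"
  by (induction rule: step.induct) auto

lemma step_hist_mono: "pstep s s' \<Longrightarrow> set (hist s) \<subseteq> set (hist s')"
  using step_hist_cases by fastforce

lemma step_wtag_mono:
  "pstep s s' \<Longrightarrow> get_tag_phase_untagged s \<Longrightarrow> wtag s op = Some t \<Longrightarrow> wtag s' op = Some t"
  by (induction rule: step.induct) (auto simp: get_tag_phase_untagged_def)

lemma finite_state_step:
  assumes "pstep s s'" and "finite_state s"
  shows "finite_state s'"
proof -
  have "finite (signed s')"
    using assms by (induction rule: step.induct) (auto simp: finite_state_def)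
  moreover have "finite (lst s' j)" for j
  proof -
    have "finite (lst s j)" using assms(2) by (simp add: finite_state_def)
    with step_lst_cases[OF assms(1), of j] show ?thesis by (auto simp: finite_accept_put)
  qed
  ultimately show ?thesis by (simp add: finite_state_def)
qed

lemma lists_tag_injective_step:
  "pstep s s' \<Longrightarrow> lists_tag_injective s \<Longrightarrow> lists_tag_injective s'"
  using step_lst_cases inj_on_fst_accept_put unfolding lists_tag_injective_def by metis

lemma lists_signed_step:
  assumes "pstep s s'" and "lists_signed s"
  shows "lists_signed s'"
  unfolding lists_signed_def
proof (intro allI impI)
  fix j assume "j < N"
  then have "lst s j \<subseteq> signed s" using assms(2) by (simp add: lists_signed_def)
  then have "lst s' j \<subseteq> signed s"
    using step_lst_cases[OF assms(1), of j] accept_put_subset_signed by metis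
  then show "lst s' j \<subseteq> signed s'" using step_signed_mono[OF assms(1)] by blast
qed

lemma signed_tags_written_step:
  assumes "pstep s s'" and "finite_state s" "get_tag_phase_untagged s" "signed_tags_written s"
  shows "signed_tags_written s'"
  using assms
proof (induction rule: step.induct)
  case (client_tag_done j c s p v R t t')
  then have "wtag s (c, cnt s c) = None" by (simp add: get_tag_phase_untagged_def)
  then show ?case using client_tag_done.prems(3) by (auto simp: signed_tags_written_def ran_map_upd)
next
  case (client_data_done j c s L R t v)
  have "finite (good_tags k (signed s) (insert (j, L) R))"
    using client_data_done.prems(1) k_pos by (simp add: finite_state_def finite_good_tags)
  then have "t \<in> fst ` signed s"
    using client_data_done.hyps(6,7) Max_in good_tags_subset[OF k_pos] by blast
  then show ?case using client_data_done.prems(3) by (auto simp: signed_tags_written_def)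
qed (auto simp: signed_tags_written_def)

lemma written_tags_invoked_step:
  assumes "pstep s s'" and "pending_ops_invoked s" "written_tags_invoked s"
  shows "written_tags_invoked s'"
  using assms
proof (induction rule: step.induct)
  case (client_tag_done j c s p v R t t')
  then have "InvW (c, cnt s c) v \<in> set (hist s)" by (simp add: pending_ops_invoked_def)
  then show ?case using client_tag_done.prems(2)
    by (auto simp: written_tags_invoked_def simp del: split_paired_All split_paired_Ex)
qed (auto simp: written_tags_invoked_def simp del: split_paired_All split_paired_Ex)

lemma get_tag_phase_untagged_step:
  assumes "pstep s s'" and "invoked_ids_issued s" "written_tags_invoked s" "get_tag_phase_untagged s"
  shows "get_tag_phase_untagged s'"
  using assms
proof (induction rule: step.induct)
  case (invoke_write s c v)
  have "wtag s (c, cnt s c) = None"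
  proof (rule ccontr)
    assume "wtag s (c, cnt s c) \<noteq> None"
    then obtain v' where "InvW (c, cnt s c) v' \<in> set (hist s)"
      using invoke_write.prems(2) unfolding written_tags_invoked_def by blast
    then show False
      using invoke_write.hyps invoke_write.prems(1) by (fastforce simp: invoked_ids_issued_def)
  qed
  then show ?case using invoke_write.prems(3) by (auto simp: get_tag_phase_untagged_def)
qed (auto simp: get_tag_phase_untagged_def)

lemma puts_signed_step:
  assumes "pstep s s'" and "pending_ops_invoked s" "get_tag_phase_untagged s" "puts_signed s"
  shows "puts_signed s'"
proof -
  have old: "p \<in> signed s' \<and> (wtag s' op = Some (fst p) \<or> InvR op \<in> set (hist s'))"
    if "(Client c, d, op, PutM p) \<in># net s" for c d op p
  proof -
    have "p \<in> signed s \<and> (wtag s op = Some (fst p) \<or> InvR op \<in> set (hist s))"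
      using assms(4) that unfolding puts_signed_def by blast
    then show ?thesis
      using step_signed_mono[OF assms(1)] step_hist_mono[OF assms(1)] step_wtag_mono[OF assms(1,3)]
      by blast
  qed
  show ?thesis
    using assms(1,2) old
  proof (induction rule: step.induct)
    case (client_data_done j c s L R t v)
    then have "InvR (c, cnt s c) \<in> set (hist s)" by (simp add: pending_ops_invoked_def)
    with client_data_done.prems(2) show ?case
      unfolding puts_signed_def by (fastforce dest: in_diffD)
  qed (fastforce simp: puts_signed_def dest: in_diffD)+
qed

lemma step_new_client_packet:
  assumes "pstep s s'" and "(Client c, d, op, m) \<in># net s'"
  shows "(Client c, d, op, m) \<in># net s \<or>
    op = (c, cnt s c) \<and> (cst s c \<noteq> Idle \<or> (\<exists>x\<in>set (hist s'). is_inv x op))"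
  using assms by (induction rule: step.induct) (auto dest!: in_diff_plusD in_diffD)

lemma client_packets_invoked_step:
  assumes "pstep s s'" and "pending_ops_invoked s" "client_packets_invoked s"
  shows "client_packets_invoked s'"
  unfolding client_packets_invoked_def
proof (intro allI impI)
  fix c d op m assume "(Client c, d, op, m) \<in># net s'"
  with step_new_client_packet[OF assms(1)] pending_op_invoked[OF assms(2)] assms(3)
  have "\<exists>x\<in>set (hist s) \<union> set (hist s'). is_inv x op"
    unfolding client_packets_invoked_def by blast
  then show "\<exists>x\<in>set (hist s'). is_inv x op" using step_hist_mono[OF assms(1)] by blast
qed

lemma step_new_correct_packet:
  assumes "pstep s s'" and "(Node j, Client c, op, m) \<in># net s'" and "j \<notin> B"
  shows "(Node j, Client c, op, m) \<in># net s \<or>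
    (\<exists>m'. (Client c, Node j, op, m') \<in># net s \<and>
      (m = Ack \<longrightarrow> (\<exists>p. m' = PutM p \<and> lst s' j = accept_put \<delta> (signed s) p (lst s j))) \<and>
      (\<forall>L. m = RData L \<longrightarrow> L = lst s j))"
  using assms
proof (induction rule: step.induct)
  case (node_put j' src oid p s L')
  show ?case
  proof (cases "(Node j, Client c, op, m) = (Node j', src, oid, Ack)")
    case True
    then show ?thesis
      using node_put by (intro disjI2 exI[of _ "PutM p"]) (auto simp: accept_put_def)
  next
    case False
    then show ?thesis using node_put.prems(1) by (auto dest: in_diffD)
  qed
qed (auto dest!: in_diff_plusD in_diffD)

lemma correct_packets_invoked_step:
  assumes "pstep s s'" and "client_packets_invoked s" "correct_packets_invoked s"
  shows "correct_packets_invoked s'"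
  unfolding correct_packets_invoked_def
proof (intro allI impI)
  fix j c op m assume "j \<notin> B" "(Node j, Client c, op, m) \<in># net s'"
  with step_new_correct_packet[OF assms(1)] assms(2,3)
  have "\<exists>x\<in>set (hist s). is_inv x op"
    unfolding client_packets_invoked_def correct_packets_invoked_def by blast
  then show "\<exists>x\<in>set (hist s'). is_inv x op" using step_hist_mono[OF assms(1)] by blast
qed

lemma node_packets_from_flexnodes_step:
  assumes "pstep s s'" and "node_packets_from_flexnodes s"
  shows "node_packets_from_flexnodes s'"
proof -
  have "j < N" if "(Node j, d, op, m) \<in># net s" for j d op m
    using assms(2) that unfolding node_packets_from_flexnodes_def by blast
  from assms(1) this show ?thesis
    by (induction rule: step.induct)
      (use byzantine_flexnodes in
        \<open>auto simp: node_packets_from_flexnodes_def dest!: in_diff_plusD in_diffD\<close>)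
qed

lemma collected_from_flexnodes_step:
  assumes "pstep s s'" and "node_packets_from_flexnodes s" "collected_from_flexnodes s"
  shows "collected_from_flexnodes s'"
proof -
  have "j < N" if "(Node j, d, op, m) \<in># net s" for j d op m
    using assms(2) that unfolding node_packets_from_flexnodes_def by blast
  from assms(1) this assms(3) show ?thesis
    by (induction rule: step.induct)
      (auto simp: collected_from_flexnodes_def simp del: split_paired_All split_paired_Ex)
qed

definition invariant :: "('v, 'e) gstate \<Rightarrow> bool" where
  "invariant s \<longleftrightarrow> invoked_ids_issued s \<and> responded_ids_retired s \<and> invocations_unique s \<and>
     responses_unique s \<and> pending_ops_invoked s \<and> finite_state s \<and> lists_tag_injective s \<and>
     lists_signed s \<and> signed_tags_written s \<and> written_tags_invoked s \<and>
     get_tag_phase_untagged s \<and> puts_signed s \<and> client_packets_invoked s \<and>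
     correct_packets_invoked s \<and> node_packets_from_flexnodes s \<and> collected_from_flexnodes s"

lemma invariant_init: "invariant (init_state N enc v0)"
  by (auto simp: invariant_def init_state_def invoked_ids_issued_def responded_ids_retired_def
      invocations_unique_def responses_unique_def pending_ops_invoked_def finite_state_def
      lists_tag_injective_def lists_signed_def signed_tags_written_def written_tags_invoked_def
      get_tag_phase_untagged_def puts_signed_def client_packets_invoked_def
      correct_packets_invoked_def node_packets_from_flexnodes_def collected_from_flexnodes_def)

lemma invariant_step: "pstep s s' \<Longrightarrow> invariant s \<Longrightarrow> invariant s'"
  unfolding invariant_def
  using invoked_ids_issued_step responded_ids_retired_step invocations_unique_step
    responses_unique_step pending_ops_invoked_step finite_state_step lists_tag_injective_step
    lists_signed_step signed_tags_written_step written_tags_invoked_step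
    get_tag_phase_untagged_step puts_signed_step client_packets_invoked_step
    correct_packets_invoked_step node_packets_from_flexnodes_step collected_from_flexnodes_step
  by meson

lemma reach_step: "reach s \<Longrightarrow> pstep s s' \<Longrightarrow> reach s'"
  by (simp add: reachable_def)

lemma reach_rtranclp: "reach s \<Longrightarrow> pstep\<^sup>*\<^sup>* s s' \<Longrightarrow> reach s'"
  by (simp add: reachable_def)

lemma reach_invariant: "reach s \<Longrightarrow> invariant s"
  unfolding reachable_def
proof (induction rule: rtranclp_induct)
  case base
  then show ?case by (rule invariant_init)
next
  case (step s s')
  then show ?case using invariant_step by blast
qed

lemma rtranclp_signed_mono: "pstep\<^sup>*\<^sup>* s s' \<Longrightarrow> signed s \<subseteq> signed s'"
  by (induction rule: rtranclp_induct) (auto dest: step_signed_mono)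

lemma rtranclp_wtag_mono:
  assumes "reach s" and "pstep\<^sup>*\<^sup>* s s'" and "wtag s op = Some t"
  shows "wtag s' op = Some t"
  using assms(2,3)
proof (induction rule: rtranclp_induct)
  case (step u v)
  have "get_tag_phase_untagged u"
    using reach_invariant[OF reach_rtranclp[OF assms(1) step.hyps(1)]] by (simp add: invariant_def)
  then show ?case using step step_wtag_mono by blast
qed

lemma split_at_history_index:
  assumes "pstep\<^sup>*\<^sup>* x y" and "length (hist x) \<le> i" and "i < length (hist y)"
  obtains u v where "pstep\<^sup>*\<^sup>* x u" "pstep u v" "pstep\<^sup>*\<^sup>* v y"
    "hist u = take i (hist y)" "hist v = take (Suc i) (hist y)"
proof -
  have "\<exists>u v. pstep\<^sup>*\<^sup>* x u \<and> pstep u v \<and> pstep\<^sup>*\<^sup>* v y \<and>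
      hist u = take i (hist y) \<and> hist v = take (Suc i) (hist y)"
    using assms
  proof (induction rule: rtranclp_induct)
    case (step y z)
    show ?case
    proof (cases "i < length (hist y)")
      case True
      then obtain u v where uv: "pstep\<^sup>*\<^sup>* x u" "pstep u v" "pstep\<^sup>*\<^sup>* v y"
        "hist u = take i (hist y)" "hist v = take (Suc i) (hist y)"
        using step.IH step.prems(1) by blast
      moreover have "take i (hist z) = take i (hist y)" "take (Suc i) (hist z) = take (Suc i) (hist y)"
        using True step_hist_cases[OF step.hyps(2)] by auto
      ultimately show ?thesis using step.hyps(2) by (metis rtranclp.rtrancl_into_rtrancl)
    next
      case False
      then obtain e where "hist z = hist y @ [e]"
        using step_hist_cases[OF step.hyps(2)] step.prems(2) by auto
      moreover have "i = length (hist y)" using False step.prems(2) calculation by simp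
      ultimately show ?thesis using step.hyps by (intro exI[of _ y] exI[of _ z]) auto
    qed
  qed simp
  then show ?thesis using that by blast
qed

lemma reach_invocation_unique:
  assumes "reach s" and "i < length (hist s)" "j < length (hist s)"
    and "is_inv (hist s ! i) op" "is_inv (hist s ! j) op"
  shows "i = j"
proof -
  have "length (filter (\<lambda>x. is_inv x op) (hist s)) \<le> 1"
    using reach_invariant[OF assms(1)] unfolding invariant_def invocations_unique_def by blast
  then show ?thesis using nth_eq_if_length_filter_le_1 assms(2-5) by blast
qed

lemma reach_response_unique:
  assumes "reach s" and "i < length (hist s)" "j < length (hist s)"
    and "is_resp (hist s ! i) op" "is_resp (hist s ! j) op"
  shows "i = j"
proof -
  have "length (filter (\<lambda>x. is_resp x op) (hist s)) \<le> 1"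
    using reach_invariant[OF assms(1)] unfolding invariant_def responses_unique_def by blast
  then show ?thesis using nth_eq_if_length_filter_le_1 assms(2-5) by blast
qed

lemma reach_written_is_write:
  assumes "reach s" and "wtag s op = Some t"
  shows "op \<in> write_ops (hist s)" and "InvR op \<notin> set (hist s)"
proof -
  obtain v where "InvW op v \<in> set (hist s)"
    using reach_invariant[OF assms(1)] assms(2)
    unfolding invariant_def written_tags_invoked_def by blast
  then obtain i where i: "i < length (hist s)" "hist s ! i = InvW op v"
    by (auto simp: in_set_conv_nth)
  then show "op \<in> write_ops (hist s)" by (auto simp: write_ops_def)
  show "InvR op \<notin> set (hist s)"
  proof
    assume "InvR op \<in> set (hist s)"
    then obtain j where "j < length (hist s)" "hist s ! j = InvR op" by (auto simp: in_set_conv_nth)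
    with i reach_invocation_unique[OF assms(1), of i j op] show False by auto
  qed
qed

lemma not_precedes_if_invoked_before_response:
  assumes "reach s" and "i' < i" "i < length (hist s)"
    and "is_inv (hist s ! i') op'" "is_resp (hist s ! i) op"
  shows "\<not> precedes (hist s) op op'"
proof
  assume "precedes (hist s) op op'"
  then obtain a b where ab: "a < b" "b < length (hist s)"
    "is_resp (hist s ! a) op" "is_inv (hist s ! b) op'"
    by (auto simp: precedes_def)
  then have "a = i" "b = i'"
    using assms reach_response_unique reach_invocation_unique by (meson order.strict_trans)+
  then show False using ab(1) assms(2) by simp
qed

lemma step_response_cases:
  assumes "pstep s s'" and "hist s' = hist s @ [e]" and "is_resp e op"
  obtains j c kd tv A where "(Node j, Client c, (c, cnt s c), Ack) \<in># net s"
    "cst s c = PutPh kd tv A" "quorum_size N k \<le> card (insert j A)"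
    "e = resp_event kd (c, cnt s c) tv" "lst s' = lst s"
  using assms(1)
proof cases
  case (client_ack_done j c kd tv A)
  with assms(2,3) show ?thesis by (intro that[of j c kd tv A]) auto
qed (use assms(2,3) in auto)

section \<open>A quorum keeps the tag of a completed write\<close>

lemma invariant_accept_put_keeps_tag:
  assumes "invariant s" and "j < N" and "card (tags_above t (signed s)) \<le> \<delta>"
    and "t \<in> fst ` lst s j \<or> p \<in> signed s \<and> fst p = t"
  shows "t \<in> fst ` accept_put \<delta> (signed s) p (lst s j)"
  using assms
  by (intro accept_put_keeps_tag)
    (auto simp: invariant_def finite_state_def lists_signed_def lists_tag_injective_def)

lemma step_keeps_tag:
  assumes "pstep s s'" and "invariant s" and "card (tags_above t (signed s)) \<le> \<delta>"
    and "t \<in> fst ` lst s j"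
  shows "t \<in> fst ` lst s' j"
  using step_lst_cases[OF assms(1), of j]
proof (elim disjE conjE exE)
  fix p assume "j < N" "lst s' j = accept_put \<delta> (signed s) p (lst s j)"
  then show ?thesis using invariant_accept_put_keeps_tag[OF assms(2) _ assms(3)] assms(4) by simp
qed (use assms(4) in simp)

definition acks_hold_tag :: "tag \<Rightarrow> nat \<Rightarrow> nat \<Rightarrow> ('v, 'e) gstate \<Rightarrow> bool" where
  "acks_hold_tag t c n s \<longleftrightarrow>
     (\<forall>j. j \<notin> B \<longrightarrow> (Node j, Client c, (c, n), Ack) \<in># net s \<longrightarrow> t \<in> fst ` lst s j) \<and>
     (cnt s c = n \<longrightarrow> (\<forall>kd tv A. cst s c = PutPh kd tv A \<longrightarrow> (\<forall>j\<in>A - B. t \<in> fst ` lst s j)))"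

lemma step_put_phase_cases:
  assumes "pstep s s'" and "cst s' c = PutPh kd tv A"
  shows "cst s c = PutPh kd tv A \<and> cnt s' c = cnt s c \<or> A = {} \<or>
    (\<exists>j A0. A = insert j A0 \<and> cst s c = PutPh kd tv A0 \<and>
       (Node j, Client c, (c, cnt s c), Ack) \<in># net s \<and> cnt s' c = cnt s c)"
  using assms by (induction rule: step.induct) (auto split: if_splits)

(* The hypotheses on (c, n) say it is the write of tag t, so all its put-data pairs carry t. *)
lemma step_new_ack_holds_tag:
  assumes "pstep s s'" and "invariant s" and "card (tags_above t (signed s)) \<le> \<delta>"
    and "InvR (c, n) \<notin> set (hist s)" and "wtag s (c, n) \<in> {None, Some t}"
    and "acks_hold_tag t c n s"
    and "j \<notin> B" and ack: "(Node j, Client c, (c, n), Ack) \<in># net s'"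
  shows "t \<in> fst ` lst s' j"
proof -
  have "(Node j, Client c, (c, n), Ack) \<in># net s \<or> (\<exists>p. (Client c, Node j, (c, n), PutM p) \<in># net s
      \<and> lst s' j = accept_put \<delta> (signed s) p (lst s j))"
    using step_new_correct_packet[OF assms(1) ack assms(7)] by auto
  then show ?thesis
  proof (elim disjE exE conjE)
    assume "(Node j, Client c, (c, n), Ack) \<in># net s"
    then show ?thesis
      using assms(6,7) step_keeps_tag[OF assms(1-3)] by (auto simp: acks_hold_tag_def)
  next
    fix p assume put: "(Client c, Node j, (c, n), PutM p) \<in># net s"
      and lst': "lst s' j = accept_put \<delta> (signed s) p (lst s j)"
    have "p \<in> signed s \<and> fst p = t"
      using assms(2,4,5) put unfolding invariant_def puts_signed_def by fastforce
    moreover have "j < N"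
      using invariant_step[OF assms(1,2)] ack unfolding invariant_def node_packets_from_flexnodes_def
      by blast
    ultimately show ?thesis using invariant_accept_put_keeps_tag[OF assms(2) _ assms(3)] lst' by simp
  qed
qed

lemma acks_hold_tag_step:
  assumes "pstep s s'" and "invariant s" and "card (tags_above t (signed s)) \<le> \<delta>"
    and "InvR (c, n) \<notin> set (hist s)" and "wtag s (c, n) \<in> {None, Some t}"
    and "acks_hold_tag t c n s"
  shows "acks_hold_tag t c n s'"
proof -
  note keep = step_keeps_tag[OF assms(1-3)]
  have ack_set: "t \<in> fst ` lst s' j"
    if "cnt s' c = n" "cst s' c = PutPh kd tv A" "j \<in> A - B" for kd tv A j
    using step_put_phase_cases[OF assms(1) that(2)]
  proof (elim disjE exE conjE)
    assume "cst s c = PutPh kd tv A" "cnt s' c = cnt s c"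
    then show ?thesis using assms(6) that keep by (auto simp: acks_hold_tag_def)
  next
    fix j0 A0 assume "A = insert j0 A0" "cst s c = PutPh kd tv A0"
      "(Node j0, Client c, (c, cnt s c), Ack) \<in># net s" "cnt s' c = cnt s c"
    then show ?thesis using assms(6) that keep by (cases "j = j0") (auto simp: acks_hold_tag_def)
  qed (use that in simp)
  then show ?thesis
    using step_new_ack_holds_tag[OF assms] by (auto simp: acks_hold_tag_def)
qed

lemma acks_hold_tag_reach:
  assumes "reach s" and "card (tags_above t (signed s)) \<le> \<delta>"
    and "InvR (c, n) \<notin> set (hist s)" and "wtag s (c, n) \<in> {None, Some t}"
  shows "acks_hold_tag t c n s"
proof -
  let ?H = "\<lambda>s. card (tags_above t (signed s)) \<le> \<delta> \<and>
    InvR (c, n) \<notin> set (hist s) \<and> wtag s (c, n) \<in> {None, Some t}"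
  have H_back: "?H u" if "reach u" "pstep u v" "?H v" for u v
  proof -
    have "finite (signed v)"
      using reach_invariant[OF reach_step[OF that(1,2)]] by (simp add: invariant_def finite_state_def)
    then have "card (tags_above t (signed u)) \<le> card (tags_above t (signed v))"
      using card_tags_above_mono step_signed_mono[OF that(2)] by blast
    moreover have "wtag u (c, n) \<in> {None, Some t}"
    proof (cases "wtag u (c, n)")
      case (Some t')
      then have "wtag v (c, n) = Some t'"
        using reach_invariant[OF that(1)] step_wtag_mono[OF that(2)] by (simp add: invariant_def)
      then show ?thesis using Some that(3) by auto
    qed simp
    ultimately show ?thesis using that(3) step_hist_mono[OF that(2)] by auto
  qed
  show ?thesis
  proof (rule rtranclp_invariant_under_backward_condition[where H = ?H])
    show "pstep\<^sup>*\<^sup>* (init_state N enc v0) s" using assms(1) by (simp add: reachable_def)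
    show "?H s" using assms(2-4) by blast
    show "acks_hold_tag t c n (init_state N enc v0)"
      by (simp add: acks_hold_tag_def init_state_def)
  next
    fix u v assume "pstep\<^sup>*\<^sup>* (init_state N enc v0) u" "pstep u v"
    then show "?H v \<Longrightarrow> ?H u" and "?H u \<Longrightarrow> acks_hold_tag t c n u \<Longrightarrow> acks_hold_tag t c n v"
      using H_back acks_hold_tag_step reach_invariant by (auto simp: reachable_def)
  qed
qed

lemma write_completion_quorum:
  assumes "reach s" and "pstep s s'" and "hist s' = hist s @ [e]" and "is_resp e (c, n)"
    and "card (tags_above t (signed s)) \<le> \<delta>"
    and "InvR (c, n) \<notin> set (hist s)" and "wtag s (c, n) \<in> {None, Some t}"
  obtains Q where "Q \<subseteq> {..<N}" "quorum_size N k \<le> card Q" "\<forall>j\<in>Q - B. t \<in> fst ` lst s' j"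
proof -
  obtain j c' kd tv A where ack: "(Node j, Client c', (c', cnt s c'), Ack) \<in># net s"
    and put: "cst s c' = PutPh kd tv A" and quorum: "quorum_size N k \<le> card (insert j A)"
    and e: "e = resp_event kd (c', cnt s c') tv" and "lst s' = lst s"
    using step_response_cases[OF assms(2-4)] .
  have "c' = c" "cnt s c = n" using e assms(4) by auto
  with ack put have "(Node j, Client c, (c, n), Ack) \<in># net s" "cst s c = PutPh kd tv A" by simp_all
  then have "\<forall>j'\<in>insert j A - B. t \<in> fst ` lst s j'"
    using acks_hold_tag_reach[OF assms(1,5-7)] \<open>cnt s c = n\<close> unfolding acks_hold_tag_def by blast
  then have "\<forall>j'\<in>insert j A - B. t \<in> fst ` lst s' j'" using \<open>lst s' = lst s\<close> by simp
  moreover have "insert j A \<subseteq> {..<N}"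
    using reach_invariant[OF assms(1)] ack put
    unfolding invariant_def node_packets_from_flexnodes_def collected_from_flexnodes_def by blast
  ultimately show thesis using that quorum by blast
qed

section \<open>Reads see the tag kept by a quorum\<close>

definition read_sees_tag :: "tag \<Rightarrow> nat \<Rightarrow> nat \<Rightarrow> nat set \<Rightarrow> ('v, 'e) gstate \<Rightarrow> bool" where
  "read_sees_tag t c n Q s \<longleftrightarrow>
     (\<forall>j\<in>Q - B. t \<in> fst ` lst s j) \<and>
     (\<forall>j\<in>Q - B. \<forall>L. (Node j, Client c, (c, n), RData L) \<in># net s \<longrightarrow> t \<in> fst ` (L \<inter> signed s)) \<and>
     (cnt s c = n \<longrightarrow> (\<forall>R. cst s c = GetDataPh R \<longrightarrow>
        (\<forall>(j, L)\<in>R. j \<in> Q - B \<longrightarrow> t \<in> fst ` (L \<inter> signed s)))) \<and>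
     (cnt s c = n \<longrightarrow> (\<forall>tv A. cst s c = PutPh ReadK tv A \<longrightarrow> t \<le> fst tv))"

lemma step_get_data_phase_cases:
  assumes "pstep s s'" and "cst s' c = GetDataPh R"
  shows "cst s c = GetDataPh R \<and> cnt s' c = cnt s c \<or> R = {} \<or>
    (\<exists>j L R0. R = insert (j, L) R0 \<and> cst s c = GetDataPh R0 \<and>
       (Node j, Client c, (c, cnt s c), RData L) \<in># net s \<and> cnt s' c = cnt s c)"
  using assms by (induction rule: step.induct) (auto split: if_splits)

lemma step_read_put_phase_cases:
  assumes "pstep s s'" and "cst s' c = PutPh ReadK tv A"
  shows "(\<exists>A0. cst s c = PutPh ReadK tv A0) \<and> cnt s' c = cnt s c \<or>
    (\<exists>j L R. cst s c = GetDataPh R \<and> (Node j, Client c, (c, cnt s c), RData L) \<in># net s \<and>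
      card (fst ` insert (j, L) R) = quorum_size N k \<and>
      good_tags k (signed s) (insert (j, L) R) \<noteq> {} \<and>
      fst tv = Max (good_tags k (signed s) (insert (j, L) R)) \<and> cnt s' c = cnt s c)"
  using assms
proof (induction rule: step.induct)
  case (client_data_done j c' s L R t v)
  then show ?case
    by (cases "c' = c") (auto intro!: exI[of _ j] exI[of _ L] exI[of _ R])
qed (auto split: if_splits)

lemma collected_replies_see_tag:
  assumes "read_sees_tag t c n Q s" and "cnt s c = n" and "cst s c = GetDataPh R"
    and "(Node j, Client c, (c, n), RData L) \<in># net s"
  shows "\<forall>(j', L')\<in>insert (j, L) R. j' \<in> Q - B \<longrightarrow> t \<in> fst ` (L' \<inter> signed s)"
  using assms by (auto simp: read_sees_tag_def)

lemma get_data_result_ge_quorum_tag: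
  assumes "invariant s" and "Q \<subseteq> {..<N}" "quorum_size N k \<le> card Q" and "3 * card B + k < N"
    and "cst s c = GetDataPh R" "(Node j, Client c, (c, cnt s c), RData L) \<in># net s"
    and "card (fst ` insert (j, L) R) = quorum_size N k"
    and "good_tags k (signed s) (insert (j, L) R) \<noteq> {}"
    and "\<forall>(j', L')\<in>insert (j, L) R. j' \<in> Q - B \<longrightarrow> t \<in> fst ` (L' \<inter> signed s)"
  shows "t \<le> Max (good_tags k (signed s) (insert (j, L) R))"
proof -
  have "j < N" using assms(1,6) unfolding invariant_def node_packets_from_flexnodes_def by blast
  moreover have "fst ` R \<subseteq> {..<N}"
    using assms(1,5) unfolding invariant_def collected_from_flexnodes_def by blast
  ultimately have replies: "fst ` insert (j, L) R \<subseteq> {..<N}" by simp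
  have "finite B" using byzantine_flexnodes by (rule finite_subset) simp
  moreover have "quorum_size N k \<le> card (fst ` insert (j, L) R)" using assms(7) by simp
  ultimately have "t \<in> good_tags k (signed s) (insert (j, L) R)"
    using quorum_tag_in_good_tags[OF replies assms(2) _ assms(3) _
        quorum_size_intersection[OF assms(4)] assms(9)]
    by blast
  moreover have "finite (good_tags k (signed s) (insert (j, L) R))"
    using assms(1) k_pos by (simp add: invariant_def finite_state_def finite_good_tags)
  ultimately show ?thesis by simp
qed

lemma read_sees_tag_collected_step:
  assumes "pstep s s'" and "read_sees_tag t c n Q s"
    and "cnt s' c = n" "cst s' c = GetDataPh R" "(j, L) \<in> R" "j \<in> Q - B"
  shows "t \<in> fst ` (L \<inter> signed s)"
proof -
  have old: "t \<in> fst ` (L' \<inter> signed s)"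
    if "cnt s c = n" "cst s c = GetDataPh R'" "(j', L') \<in> R'" "j' \<in> Q - B" for R' j' L'
    using assms(2) that unfolding read_sees_tag_def by blast
  from step_get_data_phase_cases[OF assms(1,4)] show ?thesis
  proof (elim disjE exE conjE)
    fix j0 L0 R0 assume "R = insert (j0, L0) R0" "cst s c = GetDataPh R0"
      "(Node j0, Client c, (c, cnt s c), RData L0) \<in># net s" "cnt s' c = cnt s c"
    then show ?thesis using collected_replies_see_tag[OF assms(2)] assms(3,5,6) by fastforce
  qed (use old assms in auto)
qed

lemma read_sees_tag_result_step:
  assumes "pstep s s'" and "invariant s"
    and "Q \<subseteq> {..<N}" and "quorum_size N k \<le> card Q" and "3 * card B + k < N"
    and "read_sees_tag t c n Q s" and "cnt s' c = n" "cst s' c = PutPh ReadK tv A"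
  shows "t \<le> fst tv"
proof -
  have old: "t \<le> fst tv" if "cnt s c = n" "cst s c = PutPh ReadK tv A0" for A0
    using assms(6) that unfolding read_sees_tag_def by blast
  from step_read_put_phase_cases[OF assms(1,8)] show ?thesis
  proof (elim disjE exE conjE)
    fix j L R assume "cst s c = GetDataPh R" "(Node j, Client c, (c, cnt s c), RData L) \<in># net s"
      "card (fst ` insert (j, L) R) = quorum_size N k" "good_tags k (signed s) (insert (j, L) R) \<noteq> {}"
      "fst tv = Max (good_tags k (signed s) (insert (j, L) R))" "cnt s' c = cnt s c"
    then show ?thesis
      using get_data_result_ge_quorum_tag[OF assms(2-5)] collected_replies_see_tag[OF assms(6)]
        assms(7)
      by simp
  qed (use old assms(7) in auto)
qed

lemma read_sees_tag_step:
  assumes "pstep s s'" and "invariant s" and "card (tags_above t (signed s)) \<le> \<delta>"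
    and "Q \<subseteq> {..<N}" and "quorum_size N k \<le> card Q" and "3 * card B + k < N"
    and "read_sees_tag t c n Q s"
  shows "read_sees_tag t c n Q s'"
proof -
  have lists0: "t \<in> fst ` lst s j" if "j \<in> Q - B" for j
    using assms(7) that by (simp add: read_sees_tag_def)
  have replies0: "t \<in> fst ` (L \<inter> signed s)"
    if "j \<in> Q - B" "(Node j, Client c, (c, n), RData L) \<in># net s" for j L
    using assms(7) that by (simp add: read_sees_tag_def)
  have signed: "t \<in> fst ` (L \<inter> signed s) \<Longrightarrow> t \<in> fst ` (L \<inter> signed s')" for L
    using step_signed_mono[OF assms(1)] by blast
  have replies: "t \<in> fst ` (L \<inter> signed s)"
    if "j \<in> Q - B" "(Node j, Client c, (c, n), RData L) \<in># net s'" for j L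
  proof -
    have "(Node j, Client c, (c, n), RData L) \<in># net s \<or> L = lst s j"
      using step_new_correct_packet[OF assms(1) that(2)] that(1) by blast
    moreover have "lst s j \<inter> signed s = lst s j"
      using assms(2,4) that(1) by (auto simp: invariant_def lists_signed_def)
    ultimately show ?thesis using replies0 lists0 that(1) by auto
  qed
  show ?thesis
    using step_keeps_tag[OF assms(1-3) lists0] replies read_sees_tag_collected_step[OF assms(1,7)]
      read_sees_tag_result_step[OF assms(1,2,4-7)] signed
    unfolding read_sees_tag_def by blast
qed

lemma read_sees_tag_reach:
  assumes "reach s" and "pstep\<^sup>*\<^sup>* s s'" and "card (tags_above t (signed s')) \<le> \<delta>"
    and "Q \<subseteq> {..<N}" and "quorum_size N k \<le> card Q" and "3 * card B + k < N"
    and "read_sees_tag t c n Q s"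
  shows "read_sees_tag t c n Q s'"
  using assms(2,3,7)
proof (rule rtranclp_invariant_under_backward_condition
    [where H = "\<lambda>s. card (tags_above t (signed s)) \<le> \<delta>"])
  fix u v assume u: "pstep\<^sup>*\<^sup>* s u" and uv: "pstep u v"
  have "invariant u" "invariant v"
    using reach_invariant reach_rtranclp[OF assms(1) u] reach_step uv by blast+
  have "finite (signed v)" using \<open>invariant v\<close> by (simp add: invariant_def finite_state_def)
  then show "card (tags_above t (signed v)) \<le> \<delta> \<Longrightarrow> card (tags_above t (signed u)) \<le> \<delta>"
    using card_tags_above_mono[OF step_signed_mono[OF uv]] by (meson order_trans)
  show "card (tags_above t (signed u)) \<le> \<delta> \<Longrightarrow> read_sees_tag t c n Q u \<Longrightarrow> read_sees_tag t c n Q v"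
    using read_sees_tag_step[OF uv \<open>invariant u\<close> _ assms(4-6)] by blast
qed

lemma read_sees_tag_before_invocation:
  assumes "reach s" and "\<forall>x\<in>set (hist s). \<not> is_inv x (c, n)"
    and "\<forall>j\<in>Q - B. t \<in> fst ` lst s j"
  shows "read_sees_tag t c n Q s"
proof -
  have "invariant s" using reach_invariant[OF assms(1)] .
  then have "(Node j, Client c, (c, n), m) \<notin># net s" if "j \<notin> B" for j m
    using assms(2) that unfolding invariant_def correct_packets_invoked_def by blast
  moreover have "cst s c = Idle" if "cnt s c = n"
    using \<open>invariant s\<close> assms(2) that pending_op_invoked unfolding invariant_def by blast
  ultimately show ?thesis using assms(3) by (auto simp: read_sees_tag_def)
qed

lemma card_tags_above_le:
  assumes "reach u" and "pstep\<^sup>*\<^sup>* u s" and "hist u = take i (hist s)"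
    and "finite W" "card W \<le> \<delta>"
    and "\<forall>op t'. (\<exists>i'<i. is_inv (hist s ! i') op) \<longrightarrow> wtag s op = Some t' \<longrightarrow> t < t' \<longrightarrow> op \<in> W"
  shows "card (tags_above t (signed u)) \<le> \<delta>"
proof -
  have "tags_above t (signed u) \<subseteq> (\<lambda>op. the (wtag s op)) ` W"
  proof
    fix t' assume "t' \<in> tags_above t (signed u)"
    then have t': "t' \<in> fst ` signed u" "t < t'" by (auto simp: tags_above_def)
    then have "t' \<noteq> t0" by (metis leD t0_le)
    then obtain op where wu: "wtag u op = Some t'"
      using reach_invariant[OF assms(1)] t'(1)
      unfolding invariant_def signed_tags_written_def ran_def by blast
    then obtain v where "InvW op v \<in> set (hist u)"
      using reach_invariant[OF assms(1)] unfolding invariant_def written_tags_invoked_def by blast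
    then obtain i' where "i' < i" "hist s ! i' = InvW op v"
      using assms(3) by (auto simp: in_set_conv_nth)
    then have "\<exists>i'<i. is_inv (hist s ! i') op" by auto
    moreover have "wtag s op = Some t'" using rtranclp_wtag_mono[OF assms(1,2) wu] .
    ultimately have "op \<in> W" using assms(6) t'(2) by blast
    then show "t' \<in> (\<lambda>op. the (wtag s op)) ` W" using \<open>wtag s op = Some t'\<close> by force
  qed
  then have "card (tags_above t (signed u)) \<le> card W"
    using assms(4) by (meson card_image_le card_mono finite_imageI order_trans)
  then show ?thesis using assms(5) by simp
qed

lemma read_sees_completed_write:
  assumes "reach u" and "3 * card B + k < N"
    and "a < length (hist u)" "is_resp (hist u ! a) op"
    and "wtag u op \<in> {None, Some t}" "InvR op \<notin> set (hist u)"
    and "\<forall>x\<in>set (take (Suc a) (hist u)). \<not> is_inv x (c, n)"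
    and "card (tags_above t (signed u)) \<le> \<delta>"
    and "cnt u c = n" "cst u c = PutPh ReadK tv A"
  shows "t \<le> fst tv"
proof -
  obtain w w' where w: "pstep\<^sup>*\<^sup>* (init_state N enc v0) w" "pstep w w'" "pstep\<^sup>*\<^sup>* w' u"
    "hist w = take a (hist u)" "hist w' = take (Suc a) (hist u)"
    using split_at_history_index[OF assms(1)[unfolded reachable_def], of a] assms(3)
    by (auto simp: init_state_def)
  have reach_w: "reach w" "reach w'" using w(1,2) by (auto simp: reachable_def)
  have wu: "pstep\<^sup>*\<^sup>* w u" using w(2,3) by simp
  have "finite (signed u)"
    using reach_invariant[OF assms(1)] by (simp add: invariant_def finite_state_def)
  then have "card (tags_above t (signed w)) \<le> \<delta>"
    using card_tags_above_mono[OF rtranclp_signed_mono[OF wu]] assms(8) by (meson order_trans)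
  moreover have "InvR op \<notin> set (hist w)" using assms(6) w(4) set_take_subset by fastforce
  moreover have "wtag w op \<in> {None, Some t}"
    using assms(5) rtranclp_wtag_mono[OF reach_w(1) wu] by fastforce
  moreover have "hist w' = hist w @ [hist u ! a]"
    using w(4,5) assms(3) by (simp add: take_Suc_conv_app_nth)
  moreover obtain cw nw where "op = (cw, nw)" by fastforce
  ultimately obtain Q where Q: "Q \<subseteq> {..<N}" "quorum_size N k \<le> card Q" "\<forall>j\<in>Q - B. t \<in> fst ` lst w' j"
    using write_completion_quorum[OF reach_w(1) w(2)] assms(4) by metis
  have "read_sees_tag t c n Q w'"
    using read_sees_tag_before_invocation[OF reach_w(2) _ Q(3)] assms(7) w(5) by simp
  then have "read_sees_tag t c n Q u"
    using read_sees_tag_reach[OF reach_w(2) w(3) assms(8) Q(1,2) assms(2)] by blast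
  then show ?thesis using assms(9,10) by (simp add: read_sees_tag_def)
qed

lemma read_response_state:
  assumes "reach s" and "i < length (hist s)" and "hist s ! i = RespR (c, n) t v"
  obtains u A b where "reach u" "pstep\<^sup>*\<^sup>* u s" "hist u = take i (hist s)"
    "cst u c = PutPh ReadK (t, v) A" "cnt u c = n" "b < i" "is_inv (hist s ! b) (c, n)"
proof -
  obtain u u' where u: "pstep\<^sup>*\<^sup>* (init_state N enc v0) u" "pstep u u'" "pstep\<^sup>*\<^sup>* u' s"
    "hist u = take i (hist s)" "hist u' = take (Suc i) (hist s)"
    using split_at_history_index[OF assms(1)[unfolded reachable_def], of i] assms(2)
    by (auto simp: init_state_def)
  have reach_u: "reach u" and us: "pstep\<^sup>*\<^sup>* u s" using u(1-3) by (auto simp: reachable_def)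
  have "hist u' = hist u @ [RespR (c, n) t v]"
    using u(4,5) assms(2,3) by (simp add: take_Suc_conv_app_nth)
  then obtain c' kd tv A where "cst u c' = PutPh kd tv A"
    "RespR (c, n) t v = resp_event kd (c', cnt u c') tv"
    using step_response_cases[OF u(2)] is_resp_simps(2) by metis
  then have put: "cst u c = PutPh ReadK (t, v) A" "cnt u c = n"
    by (auto simp: resp_event_def split: opkind.splits)
  then have "\<exists>x\<in>set (hist u). is_inv x (c, n)"
    using pending_op_invoked reach_invariant[OF reach_u] unfolding invariant_def by fastforce
  then obtain b where "b < i" "is_inv (hist s ! b) (c, n)"
    using u(4) assms(2) by (auto simp: in_set_conv_nth)
  with reach_u us u(4) put show thesis using that by blast
qed

(* W must contain every write that can sign a tag above t before the read responds; for the
   theorem it is the set of writes concurrent with the read. *)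
lemma read_returns_tag_above_preceding_write:
  assumes "reach s" and "3 * card B + k < N"
    and "precedes (hist s) op \<rho>" and "wtag s op = Some t"
    and "i < length (hist s)" and "hist s ! i = RespR \<rho> t' v"
    and "finite W" and "card W \<le> \<delta>"
    and "\<forall>op' t''. (\<exists>i'<i. is_inv (hist s ! i') op') \<longrightarrow> wtag s op' = Some t'' \<longrightarrow> t < t'' \<longrightarrow> op' \<in> W"
  shows "t \<le> t'"
proof -
  obtain c n where \<rho>: "\<rho> = (c, n)" by fastforce
  obtain u A b where u: "reach u" "pstep\<^sup>*\<^sup>* u s" "hist u = take i (hist s)"
    and put: "cst u c = PutPh ReadK (t', v) A" "cnt u c = n" and b: "b < i" "is_inv (hist s ! b) \<rho>"
    using read_response_state[OF assms(1,5)] assms(6) \<rho> by metis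
  obtain a b' where a: "a < b'" "b' < length (hist s)"
    "is_resp (hist s ! a) op" "is_inv (hist s ! b') \<rho>"
    using assms(3) by (auto simp: precedes_def)
  have "b' = b" using reach_invocation_unique[OF assms(1) a(2) _ a(4) b(2)] b(1) assms(5) by simp
  have "\<not> is_inv (hist s ! m) \<rho>" if "m \<le> a" for m
  proof
    assume "is_inv (hist s ! m) \<rho>"
    then have "m = b"
      using reach_invocation_unique[OF assms(1) _ _ _ b(2)] that a(1,2) \<open>b' = b\<close> by simp
    then show False using that a(1) \<open>b' = b\<close> by simp
  qed
  then have "\<forall>x\<in>set (take (Suc a) (hist u)). \<not> is_inv x \<rho>"
    using u(3) by (auto simp: in_set_conv_nth)
  moreover have "wtag u op \<in> {None, Some t}"
    using assms(4) rtranclp_wtag_mono[OF u(1,2)] by (cases "wtag u op") auto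
  moreover have "InvR op \<notin> set (hist u)"
    using reach_written_is_write(2)[OF assms(1,4)] u(3) set_take_subset by fastforce
  moreover have "card (tags_above t (signed u)) \<le> \<delta>"
    using card_tags_above_le[OF u(1-3) assms(7-9)] .
  moreover have "a < length (hist u)" "hist u ! a = hist s ! a"
    using a(1) b(1) \<open>b' = b\<close> u(3) assms(5) by simp_all
  ultimately show ?thesis
    using read_sees_completed_write[OF u(1) assms(2), of a op t c n] a(3) put \<rho> by simp
qed

lemma writes_above_preceding_tags_concurrent:
  assumes "reach s" and "i < length (hist s)" and "is_resp (hist s ! i) \<rho>"
    and "\<forall>op t. precedes (hist s) op \<rho> \<longrightarrow> wtag s op = Some t \<longrightarrow> t \<le> T"
  shows "\<forall>op t. (\<exists>i'<i. is_inv (hist s ! i') op) \<longrightarrow> wtag s op = Some t \<longrightarrow> T < t \<longrightarrow>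
    op \<in> {op \<in> write_ops (hist s). concurrent (hist s) op \<rho>}"
proof (intro allI impI)
  fix op t assume "\<exists>i'<i. is_inv (hist s ! i') op" and w: "wtag s op = Some t" and "T < t"
  then obtain i' where "i' < i" "is_inv (hist s ! i') op" by blast
  then have "\<not> precedes (hist s) \<rho> op"
    using not_precedes_if_invoked_before_response[OF assms(1) _ assms(2) _ assms(3)] by blast
  moreover have "\<not> precedes (hist s) op \<rho>" using assms(4) w \<open>T < t\<close> by fastforce
  ultimately show "op \<in> {op \<in> write_ops (hist s). concurrent (hist s) op \<rho>}"
    using reach_written_is_write(1)[OF assms(1) w] by (simp add: concurrent_def)
qed

end

theorem mainTheorem7:
  fixes N k b \<delta> :: nat and B :: "nat set"
    and enc :: "'v \<Rightarrow> nat \<Rightarrow> 'e" and dec :: "'e set \<Rightarrow> 'v" and v0 :: 'v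
    and s :: "('v, 'e) gstate" and \<omega> \<rho> :: opid and t\<omega> t\<rho> :: tag and v\<rho> :: 'v
    and i1 i2 i3 :: nat
  assumes "1 \<le> k" and "k \<le> N"
    and "code_ok N k enc dec"
    and "B \<subseteq> {..<N}" and "card B \<le> b" and "real b < (real N - real k) / 3"
    and "1 \<le> \<delta>"
    and "reachable N k \<delta> B enc dec v0 s"
    and "delta_bounded \<delta> (hist s)"
    and "i1 < i2" and "i2 < length (hist s)" and "i3 < length (hist s)"
    and "hist s ! i1 = RespW \<omega>"
    and "hist s ! i2 = InvR \<rho>"
    and "hist s ! i3 = RespR \<rho> t\<rho> v\<rho>"
    and "wtag s \<omega> = Some t\<omega>"
  shows "t\<omega> \<le> t\<rho>"
proof -
  interpret protocol N k \<delta> B enc dec v0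
    using assms(1,4) by unfold_locales
  have resilient: "3 * card B + k < N" using resilience_condition_nat[OF assms(5,6)] .
  have "precedes (hist s) \<omega> \<rho>"
    unfolding precedes_def using assms(10,11,13,14) by force
  then obtain op T where op: "precedes (hist s) op \<rho>" "wtag s op = Some T" and "t\<omega> \<le> T"
    and T_max: "\<forall>op' t. precedes (hist s) op' \<rho> \<longrightarrow> wtag s op' = Some t \<longrightarrow> t \<le> T"
    using assms(16) by (rule max_preceding_tag)
  have resp: "is_resp (hist s ! i3) \<rho>" using assms(15) by simp
  define W where "W = {op \<in> write_ops (hist s). concurrent (hist s) op \<rho>}"
  have "\<rho> \<in> read_ops (hist s)" using assms(11,14) unfolding read_ops_def by blast
  then have "card W \<le> \<delta>" using assms(9) unfolding delta_bounded_def W_def by blast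
  moreover have "finite W"
    unfolding W_def using finite_write_ops by (rule finite_subset[rotated]) blast
  moreover note writes_above_preceding_tags_concurrent[OF assms(8,12) resp T_max, folded W_def]
  ultimately have "T \<le> t\<rho>"
    using read_returns_tag_above_preceding_write[OF assms(8) resilient op assms(12,15)] by blast
  with \<open>t\<omega> \<le> T\<close> show ?thesis by simp
qed

end
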